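(* There is $\varepsilon_0>0$ such that for every $\varepsilon\in(0,\varepsilon_0)$ there is $\delta=\delta(\varepsilon)>0$ with the following property. Let $p=p(n)$ with $np\ge(1/3+\varepsilon)\log n$, let $D=\delta np$ and $G\sim G(n,p)$. Then, with probability at least $1-n^{-\varepsilon}$ (for all sufficiently large $n$), $G$ satisfies each of: (C1) for every set $R\subseteq V(G)$ with $|R|\le 100$ such that $G[R]$ is connected, $|R\cap S_G(D)|\le 2$; (C2) for every set $R\subseteq V(G)$ with $|R|\le100$ such that $G[R]$ has at least as many edges as vertices, $R\cap S_G(D)=\emptyset$; (C3) $G$ has no connected component with $k$ vertices for any $k\in[3,n/2]$.
   Context: $S_G(D)$ is the set of vertices of $G$ of degree at most $D$. $G(n,p)$ is the binomial random graph; $\log$ is the natural logarithm. *)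

theory Defs
  imports Complex_Main
begin

text \<open>Graphs on the vertex set V = {0..<n}; a graph is given by its edge set,
  a set of 2-element subsets of V.\<close>

definition all_edges :: "nat \<Rightarrow> nat set set" where
  "all_edges n = {e. \<exists>u v. u < n \<and> v < n \<and> u \<noteq> v \<and> e = {u, v}}"

definition gnp_prob :: "nat \<Rightarrow> real \<Rightarrow> (nat set set \<Rightarrow> bool) \<Rightarrow> real" where
  "gnp_prob n p P =
     (\<Sum>E \<in> {E. E \<subseteq> all_edges n \<and> P E}.
        p ^ card E * (1 - p) ^ (card (all_edges n) - card E))"

definition degree :: "nat set set \<Rightarrow> nat \<Rightarrow> nat" where
  "degree E v = card {u. {u, v} \<in> E}"

definition small_set :: "nat \<Rightarrow> nat set set \<Rightarrow> real \<Rightarrow> nat set" where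
  "small_set n E D = {v. v < n \<and> real (degree E v) \<le> D}"

definition induced_edges :: "nat set set \<Rightarrow> nat set \<Rightarrow> nat set set" where
  "induced_edges E R = {e \<in> E. e \<subseteq> R}"

definition adj :: "nat set set \<Rightarrow> (nat \<times> nat) set" where
  "adj E = {(u, v). {u, v} \<in> E \<and> u \<noteq> v}"

definition induced_connected :: "nat set set \<Rightarrow> nat set \<Rightarrow> bool" where
  "induced_connected E R \<longleftrightarrow> (\<forall>u\<in>R. \<forall>v\<in>R. (u, v) \<in> (adj (induced_edges E R))\<^sup>*)"

definition component :: "nat \<Rightarrow> nat set set \<Rightarrow> nat \<Rightarrow> nat set" where
  "component n E v = {u. u < n \<and> (v, u) \<in> (adj E)\<^sup>*}"

definition prop_C1 :: "nat \<Rightarrow> nat set set \<Rightarrow> real \<Rightarrow> bool" where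
  "prop_C1 n E D \<longleftrightarrow> (\<forall>R. R \<subseteq> {..<n} \<and> card R \<le> 100 \<and> induced_connected E R
       \<longrightarrow> card (R \<inter> small_set n E D) \<le> 2)"

definition prop_C2 :: "nat \<Rightarrow> nat set set \<Rightarrow> real \<Rightarrow> bool" where
  "prop_C2 n E D \<longleftrightarrow> (\<forall>R. R \<subseteq> {..<n} \<and> card R \<le> 100 \<and> card (induced_edges E R) \<ge> card R
       \<longrightarrow> R \<inter> small_set n E D = {})"

definition prop_C3 :: "nat \<Rightarrow> nat set set \<Rightarrow> bool" where
  "prop_C3 n E \<longleftrightarrow> (\<forall>v<n. \<not> (3 \<le> card (component n E v) \<and> real (card (component n E v)) \<le> real n / 2))"

end

theory Submission
  imports Defs
begin

text \<open>First moment method. Every failure of (C1)-(C3) is witnessed by a small structure in G: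
  a set K of r vertices carrying a spanning tree (C1, C3) or r edges (C2) of G, together with
  three (C1) or one (C2) vertices T in K of degree at most D = \<delta> n p, or, for (C3), with no
  edge of G leaving K. The degree condition becomes multiplicative through the exponential
  Markov weight \<delta> ^ (e(T, V - K) - |T| D), which is at least 1 on a witness and has expectation
  about exp (- (1 - \<delta> - \<delta> log (1/\<delta>)) |T| n p). Summing over all witnesses, the expected total
  weight is of order n (np)^100 e^(-3(1-\<epsilon>/5) np) for (C1), (np)^100 e^(-(1-\<epsilon>/5) np) for (C2), and
  sum_k n^k k^(2k) p^(k-1) (1-p)^(k(n-k)) for (C3); for np \<ge> (1/3 + \<epsilon>) log n each of these is
  O(n^(-2\<epsilon>)), the sum over large k being geometric.\<close>

section \<open>Expectations in G(n,p)\<close>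

lemma finite_all_edges: "finite (all_edges n)"
proof -
  have "all_edges n \<subseteq> (\<lambda>(u, v). {u, v}) ` ({..<n} \<times> {..<n})"
    unfolding all_edges_def by auto
  thus ?thesis by (rule finite_subset) auto
qed

definition gnp_weight :: "nat \<Rightarrow> real \<Rightarrow> nat set set \<Rightarrow> real" where
  "gnp_weight n p E = (\<Prod>e\<in>all_edges n. if e \<in> E then p else 1 - p)"

definition gnp_expect :: "nat \<Rightarrow> real \<Rightarrow> (nat set set \<Rightarrow> real) \<Rightarrow> real" where
  "gnp_expect n p f = (\<Sum>E\<in>Pow (all_edges n). gnp_weight n p E * f E)"

lemma gnp_weight_nonneg: "0 \<le> p \<Longrightarrow> p \<le> 1 \<Longrightarrow> 0 \<le> gnp_weight n p E"
  unfolding gnp_weight_def by (intro prod_nonneg) auto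

lemma gnp_weight_eq:
  assumes "E \<subseteq> all_edges n"
  shows "gnp_weight n p E = p ^ card E * (1 - p) ^ (card (all_edges n) - card E)"
proof -
  have fin: "finite (all_edges n)" by (rule finite_all_edges)
  have "gnp_weight n p E = (\<Prod>e\<in>E. p) * (\<Prod>e\<in>all_edges n - E. 1 - p)"
    unfolding gnp_weight_def by (subst prod.subset_diff[OF assms fin]) (auto simp: mult.commute)
  thus ?thesis using card_Diff_subset[OF finite_subset[OF assms fin] assms] by simp
qed

lemma gnp_prob_eq_sum_weight: "gnp_prob n p P = (\<Sum>E\<in>{E\<in>Pow (all_edges n). P E}. gnp_weight n p E)"
  unfolding gnp_prob_def by (intro sum.cong) (auto simp: gnp_weight_eq)

lemma gnp_expect_cong:
  "(\<And>E. E \<subseteq> all_edges n \<Longrightarrow> f E = g E) \<Longrightarrow> gnp_expect n p f = gnp_expect n p g"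
  unfolding gnp_expect_def by (intro sum.cong) auto

lemma gnp_expect_add: "gnp_expect n p (\<lambda>E. f E + g E) = gnp_expect n p f + gnp_expect n p g"
  unfolding gnp_expect_def by (simp add: algebra_simps sum.distrib)

lemma gnp_expect_sum:
  "finite I \<Longrightarrow> gnp_expect n p (\<lambda>E. \<Sum>i\<in>I. f i E) = (\<Sum>i\<in>I. gnp_expect n p (f i))"
  unfolding gnp_expect_def by (simp add: sum_distrib_left sum.swap[of _ "Pow _"])

lemma gnp_expect_cmult: "gnp_expect n p (\<lambda>E. c * f E) = c * gnp_expect n p f"
  unfolding gnp_expect_def by (simp add: sum_distrib_left algebra_simps)

lemma gnp_expect_edge_product:
  "gnp_expect n p (\<lambda>E. \<Prod>e\<in>all_edges n. g e (e \<in> E))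
     = (\<Prod>e\<in>all_edges n. p * g e True + (1 - p) * g e False)"
proof -
  let ?U = "all_edges n" and ?h = "\<lambda>E e. (if e \<in> E then p else 1 - p) * g e (e \<in> E)"
  have fin: "finite ?U" by (rule finite_all_edges)
  have "gnp_expect n p (\<lambda>E. \<Prod>e\<in>?U. g e (e \<in> E)) = (\<Sum>E\<in>Pow ?U. \<Prod>e\<in>?U. ?h E e)"
    unfolding gnp_expect_def gnp_weight_def by (simp add: prod.distrib)
  also have "\<dots> = (\<Sum>E\<in>Pow ?U. (\<Prod>e\<in>E. p * g e True) * (\<Prod>e\<in>?U - E. (1 - p) * g e False))"
  proof (intro sum.cong refl)
    fix E assume "E \<in> Pow ?U"
    hence "(\<Prod>e\<in>?U. ?h E e) = (\<Prod>e\<in>E. ?h E e) * (\<Prod>e\<in>?U - E. ?h E e)"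
      using fin by (subst prod.subset_diff[of E]) (auto simp: mult.commute)
    also have "(\<Prod>e\<in>E. ?h E e) = (\<Prod>e\<in>E. p * g e True)" by (intro prod.cong) auto
    also have "(\<Prod>e\<in>?U - E. ?h E e) = (\<Prod>e\<in>?U - E. (1 - p) * g e False)"
      by (intro prod.cong) auto
    finally show "(\<Prod>e\<in>?U. ?h E e) = (\<Prod>e\<in>E. p * g e True) * (\<Prod>e\<in>?U - E. (1 - p) * g e False)" .
  qed
  also have "\<dots> = (\<Prod>e\<in>?U. p * g e True + (1 - p) * g e False)"
    by (rule prod_add[OF fin, symmetric])
  finally show ?thesis .
qed

lemma gnp_expect_one: "gnp_expect n p (\<lambda>_. 1) = 1"
  using gnp_expect_edge_product[of n p "\<lambda>_ _. 1"] by simp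

lemma gnp_prob_ge_one_minus_expect:
  assumes p: "0 \<le> p" "p \<le> 1"
    and nonneg: "\<And>E. 0 \<le> f E"
    and bad: "\<And>E. E \<subseteq> all_edges n \<Longrightarrow> \<not> Q E \<Longrightarrow> 1 \<le> f E"
  shows "1 - gnp_expect n p f \<le> gnp_prob n p Q"
proof -
  let ?U = "Pow (all_edges n)"
  have fin: "finite ?U" using finite_all_edges by simp
  have "1 = (\<Sum>E\<in>?U. gnp_weight n p E)"
    using gnp_expect_one[of n p] unfolding gnp_expect_def by simp
  also have "\<dots> = gnp_prob n p Q + (\<Sum>E\<in>{E\<in>?U. \<not> Q E}. gnp_weight n p E)"
    unfolding gnp_prob_eq_sum_weight using fin
    by (subst sum.union_disjoint[symmetric]) (auto intro: sum.cong)
  also have "(\<Sum>E\<in>{E\<in>?U. \<not> Q E}. gnp_weight n p E) \<le> (\<Sum>E\<in>{E\<in>?U. \<not> Q E}. gnp_weight n p E * f E)"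
    using bad gnp_weight_nonneg[OF p] by (intro sum_mono) (metis mem_Collect_eq PowD mult_left_mono mult.right_neutral)
  also have "\<dots> \<le> gnp_expect n p f"
    unfolding gnp_expect_def using fin nonneg gnp_weight_nonneg[OF p] by (intro sum_mono2) auto
  finally show ?thesis by simp
qed

definition witness_weight ::
    "real \<Rightarrow> nat set set \<Rightarrow> nat set set \<Rightarrow> nat set set \<Rightarrow> nat set set \<Rightarrow> real" where
  "witness_weight t F X Y E = (if F \<subseteq> E \<and> E \<inter> X = {} then t ^ card (E \<inter> Y) else 0)"

lemma witness_weight_nonneg: "0 \<le> t \<Longrightarrow> 0 \<le> witness_weight t F X Y E"
  unfolding witness_weight_def by simp

lemma prod_if_const: "finite U \<Longrightarrow> (\<Prod>e\<in>U. if e \<in> S then (c::real) else 1) = c ^ card (U \<inter> S)"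
  by (subst prod.inter_restrict[symmetric]) auto

lemma witness_weight_eq_edge_product:
  assumes "E \<subseteq> all_edges n" "F \<subseteq> all_edges n" "F \<inter> X = {}" "F \<inter> Y = {}"
  shows "witness_weight t F X Y E = (\<Prod>e\<in>all_edges n.
           if e \<in> F then of_bool (e \<in> E) else if e \<in> X then of_bool (e \<notin> E)
           else if e \<in> Y \<and> e \<in> E then t else 1)"
    (is "_ = (\<Prod>e\<in>_. ?g e)")
proof (cases "F \<subseteq> E \<and> E \<inter> X = {}")
  case True
  hence "(\<Prod>e\<in>all_edges n. ?g e) = (\<Prod>e\<in>all_edges n. if e \<in> E \<inter> Y then t else 1)"
    using assms by (intro prod.cong) auto
  also have "\<dots> = t ^ card (all_edges n \<inter> (E \<inter> Y))"
    by (rule prod_if_const[OF finite_all_edges])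
  also have "all_edges n \<inter> (E \<inter> Y) = E \<inter> Y" using assms(1) by auto
  finally show ?thesis using True unfolding witness_weight_def by simp
next
  case False
  then obtain e where "e \<in> F - E \<or> e \<in> E \<inter> X" by blast
  hence "e \<in> all_edges n" "?g e = 0" using assms by auto
  hence "(\<Prod>e\<in>all_edges n. ?g e) = 0" by (intro prod_zero[OF finite_all_edges]) blast
  thus ?thesis using False unfolding witness_weight_def by (simp only: if_False)
qed

lemma gnp_expect_witness_weight:
  assumes "F \<subseteq> all_edges n" "X \<subseteq> all_edges n" "Y \<subseteq> all_edges n"
    and "F \<inter> X = {}" "F \<inter> Y = {}" "X \<inter> Y = {}"
  shows "gnp_expect n p (witness_weight t F X Y)
           = p ^ card F * (1 - p) ^ card X * (1 - p + t * p) ^ card Y"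
proof -
  let ?U = "all_edges n"
  let ?g = "\<lambda>e b. if e \<in> F then of_bool b else if e \<in> X then of_bool (\<not> b)
              else if e \<in> Y \<and> b then t else (1::real)"
  have "gnp_expect n p (witness_weight t F X Y) = gnp_expect n p (\<lambda>E. \<Prod>e\<in>?U. ?g e (e \<in> E))"
    using assms by (intro gnp_expect_cong witness_weight_eq_edge_product) auto
  also have "\<dots> = (\<Prod>e\<in>?U. p * ?g e True + (1 - p) * ?g e False)"
    by (rule gnp_expect_edge_product)
  also have "\<dots> = (\<Prod>e\<in>?U.
          (if e \<in> F then p else 1) * (if e \<in> X then 1 - p else 1) * (if e \<in> Y then 1 - p + t * p else 1))"
    using assms by (intro prod.cong) auto
  also have "\<dots> = p ^ card F * (1 - p) ^ card X * (1 - p + t * p) ^ card Y"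
    using assms by (simp add: prod.distrib prod_if_const[OF finite_all_edges] Int_absorb1)
  finally show ?thesis .
qed

section \<open>Spanning trees and cross edges\<close>

lemma shortest_path_predecessor:
  assumes "(r, u) \<in> R\<^sup>*" "u \<noteq> r"
  shows "\<exists>w. (r, w) \<in> R\<^sup>* \<and> (w, u) \<in> R \<and>
           (LEAST k. (r, w) \<in> R ^^ k) < (LEAST k. (r, u) \<in> R ^^ k)"
proof -
  define d where "d = (LEAST k. (r, u) \<in> R ^^ k)"
  have path: "(r, u) \<in> R ^^ d"
    unfolding d_def using assms(1) by (metis LeastI rtrancl_power)
  have "d \<noteq> 0"
  proof
    assume "d = 0"
    thus False using path assms(2) by simp
  qed
  then obtain w where w: "(r, w) \<in> R ^^ (d - 1)" "(w, u) \<in> R"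
    using path by (metis Suc_pred' bot_nat_0.not_eq_extremum relpow_Suc_E)
  have "(LEAST k. (r, w) \<in> R ^^ k) \<le> d - 1" using w(1) by (rule Least_le)
  thus ?thesis using w \<open>d \<noteq> 0\<close> relpow_imp_rtrancl unfolding d_def by fastforce
qed

text \<open>A spanning tree, given by the edges to the parents of a breadth-first search from r.\<close>
lemma reachable_has_spanning_edges:
  assumes fin: "finite K" and r: "r \<in> K"
    and reach: "\<And>u. u \<in> K \<Longrightarrow> (r, u) \<in> (adj G)\<^sup>*"
    and closed: "\<And>u. (r, u) \<in> (adj G)\<^sup>* \<Longrightarrow> u \<in> K"
  shows "\<exists>F \<subseteq> G. card F = card K - 1 \<and> (\<forall>e\<in>F. e \<subseteq> K)"
proof -
  define dist where "dist u = (LEAST k. (r, u) \<in> adj G ^^ k)" for u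
  have "\<forall>u\<in>K - {r}. \<exists>w. w \<in> K \<and> {u, w} \<in> G \<and> w \<noteq> u \<and> dist w < dist u"
  proof
    fix u assume u: "u \<in> K - {r}"
    obtain w where w: "(r, w) \<in> (adj G)\<^sup>*" "(w, u) \<in> adj G" "dist w < dist u"
      using shortest_path_predecessor[OF reach[of u]] u unfolding dist_def by blast
    have "w \<in> K" using closed[OF w(1)] .
    moreover have "{u, w} \<in> G" "w \<noteq> u" using w(2) unfolding adj_def by (auto simp: insert_commute)
    ultimately show "\<exists>w. w \<in> K \<and> {u, w} \<in> G \<and> w \<noteq> u \<and> dist w < dist u"
      using w(3) by blast
  qed
  from bchoice[OF this] obtain par where par: "\<And>u. u \<in> K - {r} \<Longrightarrow>
      par u \<in> K \<and> {u, par u} \<in> G \<and> par u \<noteq> u \<and> dist (par u) < dist u"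
    by blast
  have inj: "inj_on (\<lambda>u. {u, par u}) (K - {r})"
  proof (rule inj_onI, rule ccontr)
    fix u v assume u: "u \<in> K - {r}" and v: "v \<in> K - {r}" and eq: "{u, par u} = {v, par v}"
      and "u \<noteq> v"
    hence "u = par v" "v = par u" by (auto simp: doubleton_eq_iff)
    thus False using par[OF u] par[OF v] by simp
  qed
  show ?thesis
  proof (intro exI conjI)
    show "(\<lambda>u. {u, par u}) ` (K - {r}) \<subseteq> G" "\<forall>e\<in>(\<lambda>u. {u, par u}) ` (K - {r}). e \<subseteq> K"
      using par by auto
    show "card ((\<lambda>u. {u, par u}) ` (K - {r})) = card K - 1"
      using card_image[OF inj] fin r by simp
  qed
qed

definition edges_in :: "nat \<Rightarrow> nat set \<Rightarrow> nat set set" where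
  "edges_in n R = {e \<in> all_edges n. e \<subseteq> R}"

lemma finite_edges_in: "finite (edges_in n R)"
  unfolding edges_in_def using finite_all_edges by simp

lemma card_edges_in: "finite R \<Longrightarrow> card (edges_in n R) \<le> card R ^ 2"
proof -
  assume fin: "finite R"
  have "edges_in n R \<subseteq> (\<lambda>(a, b). {a, b}) ` (R \<times> R)"
  proof
    fix e assume "e \<in> edges_in n R"
    then obtain u v where "e = {u, v}" "e \<subseteq> R" unfolding edges_in_def all_edges_def by blast
    thus "e \<in> (\<lambda>(a, b). {a, b}) ` (R \<times> R)" by (intro image_eqI[of _ _ "(u, v)"]) auto
  qed
  hence "card (edges_in n R) \<le> card ((\<lambda>(a, b). {a, b}) ` (R \<times> R))"
    using fin by (intro card_mono) auto
  also have "\<dots> \<le> card (R \<times> R)" using fin by (intro card_image_le) auto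
  finally show ?thesis by (simp add: card_cartesian_product power2_eq_square)
qed

lemma induced_connected_has_spanning_edges:
  assumes "R \<subseteq> {..<n}" "R \<noteq> {}" "induced_connected E R" "E \<subseteq> all_edges n"
  shows "\<exists>F \<subseteq> E. F \<subseteq> edges_in n R \<and> card F = card R - 1"
proof -
  obtain r where r: "r \<in> R" using assms(2) by auto
  have closed: "u \<in> R" if "(r, u) \<in> (adj (induced_edges E R))\<^sup>*" for u
    using that r
  proof induction
    case (step x y)
    thus ?case unfolding adj_def induced_edges_def by auto
  qed
  have "\<exists>F \<subseteq> induced_edges E R. card F = card R - 1 \<and> (\<forall>e\<in>F. e \<subseteq> R)"
  proof (rule reachable_has_spanning_edges[OF finite_subset[OF assms(1)] r _ closed])
    show "(r, u) \<in> (adj (induced_edges E R))\<^sup>*" if "u \<in> R" for u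
      using assms(3) r that unfolding induced_connected_def by blast
  qed auto
  then obtain F where F: "F \<subseteq> induced_edges E R" "card F = card R - 1" by blast
  have "F \<subseteq> E" using F(1) unfolding induced_edges_def by auto
  moreover have "F \<subseteq> edges_in n R"
    using F(1) assms(4) unfolding induced_edges_def edges_in_def by auto
  ultimately show ?thesis using F(2) by blast
qed

lemma component_subset: "component n E v \<subseteq> {..<n}"
  unfolding component_def by auto

lemma component_closed:
  assumes "E \<subseteq> all_edges n" "v < n" "(v, u) \<in> (adj E)\<^sup>*"
  shows "u \<in> component n E v"
  using assms(3)
proof induction
  case (step x y)
  have "{x, y} \<in> all_edges n" using step(2) assms(1) unfolding adj_def by auto
  then obtain a b where "a < n" "b < n" "{x, y} = {a, b}" unfolding all_edges_def by blast
  hence "y \<in> {a, b}" by (metis insertCI)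
  hence "y < n" using \<open>a < n\<close> \<open>b < n\<close> by blast
  moreover have "(v, y) \<in> (adj E)\<^sup>*" using step(1,2) by simp
  ultimately show ?case unfolding component_def by simp
qed (use assms(2) in \<open>simp add: component_def\<close>)

lemma component_has_spanning_edges:
  assumes "E \<subseteq> all_edges n" "v < n"
  shows "\<exists>F \<subseteq> E. F \<subseteq> edges_in n (component n E v) \<and> card F = card (component n E v) - 1"
proof -
  let ?K = "component n E v"
  have "\<exists>F \<subseteq> E. card F = card ?K - 1 \<and> (\<forall>e\<in>F. e \<subseteq> ?K)"
  proof (rule reachable_has_spanning_edges)
    show "finite ?K" by (rule finite_subset[OF component_subset]) simp
    show "v \<in> ?K" using assms(2) unfolding component_def by simp
    show "(v, u) \<in> (adj E)\<^sup>*" if "u \<in> ?K" for u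
      using that unfolding component_def by simp
  qed (rule component_closed[OF assms])
  then obtain F where F: "F \<subseteq> E" "card F = card ?K - 1" "\<forall>e\<in>F. e \<subseteq> ?K" by blast
  have "F \<subseteq> edges_in n ?K" using F(1,3) assms(1) unfolding edges_in_def by auto
  thus ?thesis using F(1,2) by blast
qed

definition cross_edges :: "nat \<Rightarrow> nat set \<Rightarrow> nat set \<Rightarrow> nat set set" where
  "cross_edges n K T = (\<lambda>(v, x). {v, x}) ` (T \<times> ({..<n} - K))"

lemma cross_edges_subset:
  assumes "T \<subseteq> K" "K \<subseteq> {..<n}"
  shows "cross_edges n K T \<subseteq> all_edges n"
proof
  fix e assume "e \<in> cross_edges n K T"
  then obtain v x where "v \<in> T" "x < n" "x \<notin> K" "e = {v, x}" unfolding cross_edges_def by auto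
  moreover hence "v \<in> K" "v < n" using assms by auto
  ultimately show "e \<in> all_edges n" unfolding all_edges_def by blast
qed

lemma card_cross_edges:
  assumes "T \<subseteq> K" "K \<subseteq> {..<n}"
  shows "card (cross_edges n K T) = card T * (n - card K)"
proof -
  have fK: "finite K" using assms(2) by (rule finite_subset) simp
  have fT: "finite T" using assms(1) fK by (rule finite_subset)
  have inj: "inj_on (\<lambda>(v, x). {v, x}) (T \<times> ({..<n} - K))"
  proof (rule inj_onI, clarify)
    fix v x v' x' assume a: "v \<in> T" "x \<notin> K" "v' \<in> T" "x' \<notin> K" "{v, x} = {v', x'}"
    have "v \<in> K" "v' \<in> K" using a assms by auto
    have "v \<in> {v', x'}" unfolding a(5)[symmetric] by simp
    hence "v = v'" using \<open>v \<in> K\<close> a by auto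
    moreover have "x \<in> {v', x'}" unfolding a(5)[symmetric] by simp
    hence "x = x'" using \<open>v' \<in> K\<close> a by auto
    ultimately show "v = v' \<and> x = x'" by simp
  qed
  have "card ({..<n} - K) = n - card K" using assms fK by (simp add: card_Diff_subset)
  thus ?thesis unfolding cross_edges_def using card_image[OF inj] fT by (simp add: card_cartesian_product)
qed

lemma edges_in_cross_edges_disjoint: "F \<subseteq> edges_in n K \<Longrightarrow> F \<inter> cross_edges n K T = {}"
  unfolding edges_in_def cross_edges_def by auto

lemma component_cross_edges:
  assumes "E \<subseteq> all_edges n" "v < n"
  shows "E \<inter> cross_edges n (component n E v) (component n E v) = {}"
proof (rule ccontr)
  let ?K = "component n E v"
  assume "E \<inter> cross_edges n ?K ?K \<noteq> {}"
  then obtain e where "e \<in> E" "e \<in> cross_edges n ?K ?K" by blast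
  then obtain u x where ux: "u \<in> ?K" "x \<notin> ?K" "{u, x} \<in> E"
    unfolding cross_edges_def by auto
  hence "(u, x) \<in> adj E" unfolding adj_def by auto
  with ux(1) have "(v, x) \<in> (adj E)\<^sup>*" unfolding component_def by auto
  hence "x \<in> ?K" by (rule component_closed[OF assms])
  thus False using ux(2) by contradiction
qed

lemma finite_neighbours:
  assumes "E \<subseteq> all_edges n"
  shows "finite {u. {u, v} \<in> E}"
proof (rule finite_subset[of _ "{..<n}"])
  show "{u. {u, v} \<in> E} \<subseteq> {..<n}"
  proof
    fix u assume "u \<in> {u. {u, v} \<in> E}"
    then obtain a b where "a < n" "b < n" "{u, v} = {a, b}" using assms unfolding all_edges_def by blast
    thus "u \<in> {..<n}" by (auto simp: doubleton_eq_iff)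
  qed
qed simp

lemma card_cross_edges_le_degree:
  assumes E: "E \<subseteq> all_edges n" and T: "finite T"
  shows "card (E \<inter> cross_edges n K T) \<le> (\<Sum>v\<in>T. degree E v)"
proof -
  have "E \<inter> cross_edges n K T \<subseteq> (\<Union>v\<in>T. (\<lambda>u. {u, v}) ` {u. {u, v} \<in> E})"
  proof
    fix e assume "e \<in> E \<inter> cross_edges n K T"
    then obtain v x where "v \<in> T" "e = {v, x}" "e \<in> E" unfolding cross_edges_def by auto
    moreover have "{v, x} = {x, v}" by (rule insert_commute)
    ultimately have "e = {x, v}" "{x, v} \<in> E" by simp_all
    thus "e \<in> (\<Union>v\<in>T. (\<lambda>u. {u, v}) ` {u. {u, v} \<in> E})" using \<open>v \<in> T\<close> by blast
  qed
  hence "card (E \<inter> cross_edges n K T) \<le> card (\<Union>v\<in>T. (\<lambda>u. {u, v}) ` {u. {u, v} \<in> E})"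
    by (intro card_mono finite_UN_I T finite_imageI finite_neighbours[OF E])
  also have "\<dots> \<le> (\<Sum>v\<in>T. card ((\<lambda>u. {u, v}) ` {u. {u, v} \<in> E}))"
    by (rule card_UN_le[OF T])
  also have "\<dots> \<le> (\<Sum>v\<in>T. degree E v)"
    unfolding degree_def by (intro sum_mono card_image_le finite_neighbours[OF E])
  finally show ?thesis .
qed

section \<open>Witnesses of the bad events\<close>

text \<open>At least 1 if F is present and all of T have degree at most D, since then at most
  card T * D edges join T to the outside of K.\<close>
definition degree_witness_weight ::
    "nat \<Rightarrow> real \<Rightarrow> real \<Rightarrow> nat set \<Rightarrow> nat set set \<Rightarrow> nat set \<Rightarrow> nat set set \<Rightarrow> real" where
  "degree_witness_weight n t D K F T E =
     t powr (- (real (card T) * D)) * witness_weight t F {} (cross_edges n K T) E"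

lemma degree_witness_weight_nonneg: "0 \<le> t \<Longrightarrow> 0 \<le> degree_witness_weight n t D K F T E"
  unfolding degree_witness_weight_def by (simp add: witness_weight_nonneg)

lemma one_le_degree_witness_weight:
  assumes E: "E \<subseteq> all_edges n" and FE: "F \<subseteq> E" and TK: "T \<subseteq> K" and K: "K \<subseteq> {..<n}"
    and t: "0 < t" "t \<le> 1" and deg: "\<And>v. v \<in> T \<Longrightarrow> real (degree E v) \<le> D"
  shows "1 \<le> degree_witness_weight n t D K F T E"
proof -
  let ?m = "card (E \<inter> cross_edges n K T)"
  have "finite T" using TK K by (meson finite_lessThan finite_subset subset_trans)
  hence "real ?m \<le> (\<Sum>v\<in>T. real (degree E v))"
    using card_cross_edges_le_degree[OF E] by (metis of_nat_le_iff of_nat_sum)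
  also have "\<dots> \<le> real (card T) * D" using sum_mono[of T _ "\<lambda>_. D"] deg by simp
  finally have "t powr (real (card T) * D) \<le> t powr real ?m" using t by (intro powr_mono') auto
  also have "\<dots> = t ^ ?m" using t by (simp add: powr_realpow)
  finally have "1 \<le> t powr (- (real (card T) * D)) * t ^ ?m"
    using t by (simp add: powr_minus divide_simps)
  thus ?thesis using FE unfolding degree_witness_weight_def witness_weight_def by simp
qed

lemma gnp_expect_degree_witness_weight:
  assumes F: "F \<subseteq> edges_in n K" and TK: "T \<subseteq> K" and K: "K \<subseteq> {..<n}"
  shows "gnp_expect n p (degree_witness_weight n t D K F T) =
           t powr (- (real (card T) * D)) * p ^ card F * (1 - p + t * p) ^ (card T * (n - card K))"
proof -
  have "gnp_expect n p (witness_weight t F {} (cross_edges n K T))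
          = p ^ card F * (1 - p + t * p) ^ (card T * (n - card K))"
    using F cross_edges_subset[OF TK K] edges_in_cross_edges_disjoint[OF F]
    by (subst gnp_expect_witness_weight) (auto simp: edges_in_def card_cross_edges[OF TK K])
  thus ?thesis
    unfolding degree_witness_weight_def gnp_expect_cmult[where f = "witness_weight _ _ _ _"]
    by (simp add: mult.assoc)
qed

lemma one_le_component_witness_weight:
  assumes "F \<subseteq> E" "E \<inter> cross_edges n K K = {}"
  shows "1 \<le> witness_weight 1 F (cross_edges n K K) {} E"
  using assms unfolding witness_weight_def by simp

lemma gnp_expect_component_witness_weight:
  assumes F: "F \<subseteq> edges_in n K" and K: "K \<subseteq> {..<n}"
  shows "gnp_expect n p (witness_weight 1 F (cross_edges n K K) {})
           = p ^ card F * (1 - p) ^ (card K * (n - card K))"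
  using F cross_edges_subset[OF subset_refl K] edges_in_cross_edges_disjoint[OF F]
  by (subst gnp_expect_witness_weight) (auto simp: edges_in_def card_cross_edges[OF subset_refl K])

definition witnesses :: "nat \<Rightarrow> nat \<Rightarrow> nat \<Rightarrow> nat \<Rightarrow> (nat set \<times> nat set set \<times> nat set) set" where
  "witnesses n r f s = {(K, F, T). K \<subseteq> {..<n} \<and> card K = r \<and> F \<subseteq> edges_in n K \<and> card F = f
                                   \<and> T \<subseteq> K \<and> card T = s}"

lemma witnesses_eq_Sigma:
  "witnesses n r f s = Sigma {K. K \<subseteq> {..<n} \<and> card K = r}
     (\<lambda>K. {F. F \<subseteq> edges_in n K \<and> card F = f} \<times> {T. T \<subseteq> K \<and> card T = s})"
  unfolding witnesses_def by auto

lemma finite_witnesses: "finite (witnesses n r f s)"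
proof (rule finite_subset)
  show "witnesses n r f s \<subseteq> Pow {..<n} \<times> Pow (all_edges n) \<times> Pow {..<n}"
    unfolding witnesses_def edges_in_def by auto
qed (auto intro: finite_all_edges)

lemma card_witnesses:
  "card (witnesses n r f s) * (fact r * fact f * fact s) \<le> n ^ r * (r ^ 2) ^ f * r ^ s"
proof -
  let ?Ks = "{K. K \<subseteq> {..<n} \<and> card K = r}"
  let ?Fs = "\<lambda>K. {F. F \<subseteq> edges_in n K \<and> card F = f}" and ?Ts = "\<lambda>K. {T. T \<subseteq> K \<and> card T = s}"
  have finK: "finite ?Ks" by (rule finite_subset[of _ "Pow {..<n}"]) auto
  have fin: "finite K" if "K \<in> ?Ks" for K
    using that by (intro finite_subset[OF _ finite_lessThan[of n]]) simp
  have finF: "finite (?Fs K)" for K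
    by (rule finite_subset[of _ "Pow (edges_in n K)"]) (auto intro: finite_edges_in)
  have finT: "finite (?Ts K)" if "K \<in> ?Ks" for K
    by (rule finite_subset[of _ "Pow K"]) (use fin[OF that] in auto)
  have fiber: "card (?Fs K) * fact f * (card (?Ts K) * fact s) \<le> (r ^ 2) ^ f * r ^ s"
    if K: "K \<in> ?Ks" for K
  proof (intro mult_le_mono)
    have "card (?Fs K) * fact f \<le> card (edges_in n K) ^ f"
      unfolding n_subsets[OF finite_edges_in] by (rule binomial_fact_pow)
    also have "\<dots> \<le> (r ^ 2) ^ f" using card_edges_in[OF fin[OF K]] K by (simp add: power_mono)
    finally show "card (?Fs K) * fact f \<le> (r ^ 2) ^ f" .
    show "card (?Ts K) * fact s \<le> r ^ s"
      using K unfolding n_subsets[OF fin[OF K]] by (metis (mono_tags) binomial_fact_pow mem_Collect_eq)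
  qed
  have "card (witnesses n r f s) = (\<Sum>K\<in>?Ks. card (?Fs K) * card (?Ts K))"
    unfolding witnesses_eq_Sigma using finK finF finT by (simp add: card_SigmaI card_cartesian_product)
  hence "card (witnesses n r f s) * (fact f * fact s)
           = (\<Sum>K\<in>?Ks. card (?Fs K) * fact f * (card (?Ts K) * fact s))"
    by (simp add: sum_distrib_left mult_ac)
  also have "\<dots> \<le> card ?Ks * ((r ^ 2) ^ f * r ^ s)"
    using sum_mono[of ?Ks _ "\<lambda>_. (r ^ 2) ^ f * r ^ s", OF fiber] by simp
  finally have "card (witnesses n r f s) * (fact f * fact s) * fact r
                  \<le> card ?Ks * fact r * ((r ^ 2) ^ f * r ^ s)"
    by (simp add: mult_ac)
  also have "card ?Ks * fact r \<le> n ^ r"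
    unfolding n_subsets[OF finite_lessThan] card_lessThan by (rule binomial_fact_pow)
  finally show ?thesis by (simp add: mult_ac)
qed

text \<open>A failure of (C1) is witnessed by (K, F, T) in witnesses n r (r - 1) 3 (a spanning tree F
  of G[K] and three vertices T of small degree), a failure of (C2) by one in witnesses n r r 1,
  a failure of (C3) by one in witnesses n k (k - 1) 0 whose K is a component of G.\<close>
definition bad_weight :: "nat \<Rightarrow> real \<Rightarrow> real \<Rightarrow> nat set set \<Rightarrow> real" where
  "bad_weight n t D E =
     (\<Sum>r\<in>{1..100}. \<Sum>(K, F, T)\<in>witnesses n r (r - 1) 3. degree_witness_weight n t D K F T E) +
     (\<Sum>r\<in>{1..100}. \<Sum>(K, F, T)\<in>witnesses n r r 1. degree_witness_weight n t D K F T E) +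
     (\<Sum>k\<in>{3..n div 2}. \<Sum>(K, F, T)\<in>witnesses n k (k - 1) 0.
        witness_weight 1 F (cross_edges n K K) {} E)"

lemma bad_weight_nonneg: "0 \<le> t \<Longrightarrow> 0 \<le> bad_weight n t D E"
  unfolding bad_weight_def
  by (auto intro!: add_nonneg_nonneg sum_nonneg degree_witness_weight_nonneg witness_weight_nonneg)

lemma one_le_double_sum:
  fixes g :: "'a \<Rightarrow> 'b \<Rightarrow> real"
  assumes "finite A" "a \<in> A" "\<And>x. finite (B x)" "b \<in> B a" "1 \<le> g a b" "\<And>x y. 0 \<le> g x y"
  shows "1 \<le> (\<Sum>x\<in>A. \<Sum>y\<in>B x. g x y)"
proof -
  have "1 \<le> (\<Sum>y\<in>B a. g a y)" using assms by (intro order.trans[OF _ member_le_sum]) auto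
  also have "\<dots> \<le> (\<Sum>x\<in>A. \<Sum>y\<in>B x. g x y)" using assms by (intro member_le_sum sum_nonneg) auto
  finally show ?thesis .
qed

lemma not_C1_witness:
  assumes E: "E \<subseteq> all_edges n" and t: "0 < t" "t \<le> 1" and bad: "\<not> prop_C1 n E D"
  shows "\<exists>r\<in>{1..100}. \<exists>K F T. (K, F, T) \<in> witnesses n r (r - 1) 3 \<and>
           1 \<le> degree_witness_weight n t D K F T E"
proof -
  obtain R where R: "R \<subseteq> {..<n}" "card R \<le> 100" "induced_connected E R"
    "3 \<le> card (R \<inter> small_set n E D)" using bad unfolding prop_C1_def by auto
  hence "R \<noteq> {}" by auto
  then obtain F where F: "F \<subseteq> E" "F \<subseteq> edges_in n R" "card F = card R - 1"
    using induced_connected_has_spanning_edges[OF R(1) _ R(3) E] by blast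
  obtain T where T: "T \<subseteq> R \<inter> small_set n E D" "card T = 3"
    using obtain_subset_with_card_n[OF R(4)] by metis
  have "1 \<le> card R" using T card_mono[OF finite_subset[OF R(1)], of T] by simp
  hence "card R \<in> {1..100}" using R(2) by simp
  moreover have "(R, F, T) \<in> witnesses n (card R) (card R - 1) 3"
    unfolding witnesses_def using R(1) F(2,3) T by auto
  moreover have "1 \<le> degree_witness_weight n t D R F T E"
    using T by (intro one_le_degree_witness_weight[OF E F(1) _ R(1) t]) (auto simp: small_set_def)
  ultimately show ?thesis by blast
qed

lemma not_C2_witness:
  assumes E: "E \<subseteq> all_edges n" and t: "0 < t" "t \<le> 1" and bad: "\<not> prop_C2 n E D"
  shows "\<exists>r\<in>{1..100}. \<exists>K F T. (K, F, T) \<in> witnesses n r r 1 \<and>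
           1 \<le> degree_witness_weight n t D K F T E"
proof -
  obtain R v where R: "R \<subseteq> {..<n}" "card R \<le> 100" "card R \<le> card (induced_edges E R)"
    and v: "v \<in> R" "v \<in> small_set n E D" using bad unfolding prop_C2_def by auto
  obtain F where F: "F \<subseteq> induced_edges E R" "card F = card R"
    using obtain_subset_with_card_n[OF R(3)] by metis
  have "F \<subseteq> E" "F \<subseteq> edges_in n R"
    using F(1) E unfolding induced_edges_def edges_in_def by auto
  moreover have "1 \<le> card R"
    using v finite_subset[OF R(1)] by (metis One_nat_def Suc_leI card_gt_0_iff empty_iff finite_lessThan)
  ultimately show ?thesis
    using R v F(2)
    by (intro bexI[of _ "card R"] exI[of _ R] exI[of _ F] exI[of _ "{v}"] conjI
              one_le_degree_witness_weight[OF E _ _ R(1) t])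
       (auto simp: witnesses_def small_set_def)
qed

lemma not_C3_witness:
  assumes E: "E \<subseteq> all_edges n" and bad: "\<not> prop_C3 n E"
  shows "\<exists>k\<in>{3..n div 2}. \<exists>K F T. (K, F, T) \<in> witnesses n k (k - 1) 0 \<and>
           1 \<le> witness_weight 1 F (cross_edges n K K) {} E"
proof -
  obtain v where v: "v < n" "3 \<le> card (component n E v)" "real (card (component n E v)) \<le> real n / 2"
    using bad unfolding prop_C3_def by blast
  let ?K = "component n E v"
  obtain F where F: "F \<subseteq> E" "F \<subseteq> edges_in n ?K" "card F = card ?K - 1"
    using component_has_spanning_edges[OF E v(1)] by blast
  have "card ?K \<in> {3..n div 2}" using v(2,3) by simp
  moreover have "(?K, F, {}) \<in> witnesses n (card ?K) (card ?K - 1) 0"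
    unfolding witnesses_def using component_subset F(2,3) by auto
  moreover have "1 \<le> witness_weight 1 F (cross_edges n ?K ?K) {} E"
    by (rule one_le_component_witness_weight[OF F(1) component_cross_edges[OF E v(1)]])
  ultimately show ?thesis by blast
qed

lemma one_le_bad_weight:
  assumes E: "E \<subseteq> all_edges n" and t: "0 < t" "t \<le> 1"
    and bad: "\<not> (prop_C1 n E D \<and> prop_C2 n E D \<and> prop_C3 n E)"
  shows "1 \<le> bad_weight n t D E"
proof -
  let ?W1 = "\<Sum>r\<in>{1..100}. \<Sum>(K, F, T)\<in>witnesses n r (r - 1) 3. degree_witness_weight n t D K F T E"
  let ?W2 = "\<Sum>r\<in>{1..100}. \<Sum>(K, F, T)\<in>witnesses n r r 1. degree_witness_weight n t D K F T E"
  let ?W3 = "\<Sum>k\<in>{3..n div 2}. \<Sum>(K, F, T)\<in>witnesses n k (k - 1) 0.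
               witness_weight 1 F (cross_edges n K K) {} E"
  have nonneg: "0 \<le> ?W1" "0 \<le> ?W2" "0 \<le> ?W3"
    using t by (auto intro!: sum_nonneg degree_witness_weight_nonneg witness_weight_nonneg)
  consider "\<not> prop_C1 n E D" | "\<not> prop_C2 n E D" | "\<not> prop_C3 n E" using bad by blast
  hence "1 \<le> ?W1 \<or> 1 \<le> ?W2 \<or> 1 \<le> ?W3"
  proof cases
    case 1
    then obtain r K F T where "r \<in> {1..100}" "(K, F, T) \<in> witnesses n r (r - 1) 3"
      "1 \<le> degree_witness_weight n t D K F T E" using not_C1_witness[OF E t] by blast
    hence "1 \<le> ?W1" using t
      by (intro one_le_double_sum[where a = r and b = "(K, F, T)"])
         (auto simp: finite_witnesses degree_witness_weight_nonneg split: prod.splits)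
    thus ?thesis by simp
  next
    case 2
    then obtain r K F T where "r \<in> {1..100}" "(K, F, T) \<in> witnesses n r r 1"
      "1 \<le> degree_witness_weight n t D K F T E" using not_C2_witness[OF E t] by blast
    hence "1 \<le> ?W2" using t
      by (intro one_le_double_sum[where a = r and b = "(K, F, T)"])
         (auto simp: finite_witnesses degree_witness_weight_nonneg split: prod.splits)
    thus ?thesis by simp
  next
    case 3
    then obtain k K F T where "k \<in> {3..n div 2}" "(K, F, T) \<in> witnesses n k (k - 1) 0"
      "1 \<le> witness_weight 1 F (cross_edges n K K) {} E" using not_C3_witness[OF E] by blast
    hence "1 \<le> ?W3"
      by (intro one_le_double_sum[where a = k and b = "(K, F, T)"])
         (auto simp: finite_witnesses witness_weight_nonneg split: prod.splits)
    thus ?thesis by simp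
  qed
  thus ?thesis unfolding bad_weight_def using nonneg by linarith
qed

lemma gnp_expect_sum_const:
  assumes "finite W" "\<And>w. w \<in> W \<Longrightarrow> gnp_expect n p (h w) = c"
  shows "gnp_expect n p (\<lambda>E. \<Sum>w\<in>W. h w E) = real (card W) * c"
  using assms by (simp add: gnp_expect_sum)

lemma gnp_expect_bad_weight:
  "gnp_expect n p (bad_weight n t D) =
     (\<Sum>r\<in>{1..100}. real (card (witnesses n r (r - 1) 3)) *
        (t powr (- (3 * D)) * p ^ (r - 1) * (1 - p + t * p) ^ (3 * (n - r)))) +
     (\<Sum>r\<in>{1..100}. real (card (witnesses n r r 1)) *
        (t powr (- D) * p ^ r * (1 - p + t * p) ^ (n - r))) +
     (\<Sum>k\<in>{3..n div 2}. real (card (witnesses n k (k - 1) 0)) *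
        (p ^ (k - 1) * (1 - p) ^ (k * (n - k))))"
proof -
  have deg: "gnp_expect n p (\<lambda>E. case w of (K, F, T) \<Rightarrow> degree_witness_weight n t D K F T E)
               = t powr (- (real s * D)) * p ^ f * (1 - p + t * p) ^ (s * (n - r))"
    if "w \<in> witnesses n r f s" for w r f s
    using that gnp_expect_degree_witness_weight unfolding witnesses_def by auto
  have comp: "gnp_expect n p (\<lambda>E. case w of (K, F, T) \<Rightarrow> witness_weight 1 F (cross_edges n K K) {} E)
               = p ^ (k - 1) * (1 - p) ^ (k * (n - k))"
    if "w \<in> witnesses n k (k - 1) 0" for w k
    using that gnp_expect_component_witness_weight unfolding witnesses_def by auto
  show ?thesis
    unfolding bad_weight_def gnp_expect_add
    by (simp add: gnp_expect_sum gnp_expect_sum_const[OF finite_witnesses] deg comp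
             del: One_nat_def)
qed

section \<open>Counting witnesses\<close>

text \<open>Kept opaque, so that simp does not expand the numeral.\<close>
definition witness_bound :: real where "witness_bound = 100 ^ 203"

lemma witness_bound_pos: "0 < witness_bound"
  unfolding witness_bound_def by simp

lemma card_witnesses_le_witness_bound:
  assumes "r \<le> 100" "f \<le> r" "s \<le> 3"
  shows "real (card (witnesses n r f s)) \<le> real n ^ r * witness_bound"
proof -
  have "real (card (witnesses n r f s)) \<le> real (card (witnesses n r f s) * (fact r * fact f * fact s))"
    by (rule of_nat_mono) (simp add: Suc_le_eq)
  also have "\<dots> \<le> real (n ^ r * (r ^ 2) ^ f * r ^ s)"
    by (simp only: of_nat_le_iff card_witnesses)
  also have "\<dots> = real n ^ r * real r ^ (2 * f + s)"
    by (simp add: power_mult power_add)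
  also have "real r ^ (2 * f + s) \<le> 100 ^ (2 * f + s)"
    using assms(1) by (intro power_mono) auto
  also have "(100::real) ^ (2 * f + s) \<le> 100 ^ 203"
    using assms by (intro power_increasing) auto
  finally show ?thesis unfolding witness_bound_def by (simp add: mult_left_mono)
qed

lemma power_div_fact_le_exp:
  assumes "0 \<le> (x::real)"
  shows "x ^ m / fact m \<le> exp x"
proof -
  have sums: "(\<lambda>k. x ^ k / fact k) sums exp x"
    using exp_converges[of x] by (simp add: divide_inverse mult.commute)
  have "(\<Sum>k\<in>{m}. x ^ k / fact k) \<le> (\<Sum>k. x ^ k / fact k)"
    using assms by (intro sum_le_suminf sums_summable[OF sums]) auto
  thus ?thesis using sums_unique[OF sums] by simp
qed

lemma card_component_witnesses:
  assumes k: "1 \<le> k"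
  shows "real (card (witnesses n k (k - 1) 0)) \<le> real k * exp (2 * real k) * real n ^ k"
proof -
  let ?F = "fact k * fact (k - 1) :: real"
  have fact_k: "fact k = real k * fact (k - 1)" using k by (cases k) auto
  have count: "real (card (witnesses n k (k - 1) 0)) * ?F \<le> real n ^ k * (real k ^ 2) ^ (k - 1)"
  proof -
    have "real (card (witnesses n k (k - 1) 0) * (fact k * fact (k - 1) * fact 0))
            \<le> real (n ^ k * (k ^ 2) ^ (k - 1) * k ^ 0)"
      using card_witnesses[of n k "k - 1" 0] by (simp only: of_nat_le_iff)
    thus ?thesis by simp
  qed
  have "(real k ^ 2) ^ (k - 1) \<le> (real k ^ k) ^ 2"
    using k by (simp add: power_mult[symmetric] mult.commute power_increasing)
  also have "real k ^ k \<le> exp (real k) * fact k"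
    using power_div_fact_le_exp[of "real k" k] by (simp add: divide_le_eq)
  hence "(real k ^ k) ^ 2 \<le> (exp (real k) * fact k) ^ 2" by (intro power_mono) auto
  also have "(exp (real k) * fact k) ^ 2 = exp (real k) ^ 2 * fact k * (real k * fact (k - 1))"
    using fact_k by (simp add: power2_eq_square algebra_simps)
  also have "\<dots> = real k * exp (2 * real k) * ?F"
    by (simp add: exp_double[symmetric] algebra_simps)
  finally have "real n ^ k * (real k ^ 2) ^ (k - 1) \<le> real n ^ k * (real k * exp (2 * real k) * ?F)"
    by (intro mult_left_mono) auto
  with count have "real (card (witnesses n k (k - 1) 0)) * ?F \<le> (real k * exp (2 * real k) * real n ^ k) * ?F"
    by (simp only: mult_ac)
  thus ?thesis by (rule mult_right_le_imp_le) simp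
qed

lemma exp_bound_from_ln:
  assumes "0 < (x::real)" "0 \<le> c" "K * ln x \<le> d"
  shows "exp (- (c * d)) \<le> x powr (- (c * K))"
proof -
  have "- (c * d) \<le> - (c * K) * ln x" using mult_left_mono[OF assms(3,2)] by simp
  thus ?thesis using assms(1) by (simp add: powr_def)
qed

lemma power_exp_decay_le_powr:
  assumes x: "1 \<le> x" and d: "0 \<le> d" and dK: "K * ln x \<le> d" and a: "0 < a" "a \<le> c"
  shows "d ^ m * exp (- (c * d)) \<le> (real m / a) ^ m * x powr (- ((c - a) * K))"
proof -
  have "d ^ m \<le> (real m / a) ^ m * exp (a * d)"
  proof (cases "m = 0")
    case False
    have "(a * d / m) ^ m \<le> exp (a * d / m) ^ m"
      using a d by (intro power_mono) (auto simp: order.trans[OF _ exp_ge_add_one_self])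
    also have "\<dots> = exp (a * d)" using False by (simp add: exp_of_nat_mult[symmetric])
    finally show ?thesis using a False by (simp add: power_divide power_mult_distrib field_simps)
  qed (use a d in simp)
  hence "d ^ m * exp (- (c * d)) \<le> (real m / a) ^ m * exp (a * d) * exp (- (c * d))"
    by (intro mult_right_mono) auto
  also have "\<dots> = (real m / a) ^ m * exp (- ((c - a) * d))"
    by (simp add: mult.assoc exp_add[symmetric] algebra_simps)
  also have "\<dots> \<le> (real m / a) ^ m * x powr (- ((c - a) * K))"
    using x dK a by (intro mult_left_mono exp_bound_from_ln) auto
  finally show ?thesis .
qed

section \<open>Bounding the expected weight\<close>

text \<open>The exponent in the exponential Markov bound for the degree of one vertex with t = \<delta>:
  \<delta> powr (- \<delta> n p) * (1 - p + \<delta> p) ^ n \<le> exp (- markov_rate \<delta> * n p).\<close>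
definition markov_rate :: "real \<Rightarrow> real" where
  "markov_rate \<delta> = 1 - \<delta> - \<delta> * ln (1 / \<delta>)"

lemma markov_rate_ge:
  assumes e: "0 < \<epsilon>" "\<epsilon> < 1/100"
  shows "1 - \<epsilon> / 5 \<le> markov_rate (\<epsilon>^2 / 400)"
proof -
  let ?\<delta> = "\<epsilon>^2 / 400"
  have "1 / ?\<delta> = (20 / \<epsilon>) ^ 2" by (simp add: power_divide)
  hence "ln (1 / ?\<delta>) = 2 * ln (20 / \<epsilon>)" using e by (simp add: ln_realpow)
  also have "\<dots> \<le> 40 / \<epsilon>" using ln_le_minus_one[of "20 / \<epsilon>"] e by simp
  finally have "?\<delta> * ln (1 / ?\<delta>) \<le> ?\<delta> * (40 / \<epsilon>)" using e by (intro mult_left_mono) auto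
  also have "\<dots> = \<epsilon> / 10" using e by (simp add: field_simps power2_eq_square)
  finally have "?\<delta> * ln (1 / ?\<delta>) \<le> \<epsilon> / 10" .
  moreover have "?\<delta> \<le> \<epsilon> / 10" using e by (simp add: power2_eq_square field_simps)
  ultimately show ?thesis unfolding markov_rate_def by simp
qed

lemma degree_tail_le:
  assumes p: "0 \<le> p" "p \<le> 1" and dl: "0 < \<delta>" "\<delta> < 1" and r: "r \<le> 100"
  shows "\<delta> powr (- (\<delta> * (real n * p))) * (1 - p + \<delta> * p) ^ (n - r)
           \<le> exp 100 * exp (- (markov_rate \<delta> * (real n * p)))"
proof -
  let ?d = "real n * p"
  have q: "(1 - \<delta>) * p \<le> 1" using p dl by (simp add: mult_le_one)
  have "(1 - p + \<delta> * p) ^ (n - r) \<le> exp (- ((1 - \<delta>) * p)) ^ (n - r)"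
    using q exp_ge_add_one_self[of "- ((1 - \<delta>) * p)"] by (intro power_mono) (auto simp: algebra_simps)
  also have "\<dots> = exp (- ((1 - \<delta>) * p * real (n - r)))"
    by (simp add: exp_of_nat_mult[symmetric] algebra_simps)
  also have "\<dots> \<le> exp (100 - (1 - \<delta>) * ?d)"
  proof -
    have "(1 - \<delta>) * p * (real n - real r) \<le> (1 - \<delta>) * p * real (n - r)"
      using p dl by (intro mult_left_mono) auto
    moreover have "(1 - \<delta>) * p * real r \<le> 1 * 100" using q r p dl by (intro mult_mono) auto
    ultimately show ?thesis by (simp add: algebra_simps)
  qed
  finally have "(1 - p + \<delta> * p) ^ (n - r) \<le> exp (100 - (1 - \<delta>) * ?d)" .
  moreover have "\<delta> powr (- (\<delta> * ?d)) = exp (\<delta> * ?d * ln (1 / \<delta>))"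
    using dl by (simp add: powr_def ln_div)
  ultimately have "\<delta> powr (- (\<delta> * ?d)) * (1 - p + \<delta> * p) ^ (n - r)
                     \<le> exp (\<delta> * ?d * ln (1 / \<delta>)) * exp (100 - (1 - \<delta>) * ?d)"
    by (simp add: mult_left_mono)
  also have "\<dots> = exp 100 * exp (- (markov_rate \<delta> * ?d))"
    unfolding markov_rate_def by (simp add: exp_add[symmetric] algebra_simps)
  finally show ?thesis .
qed

lemma degree_tail_power_le:
  assumes p: "0 \<le> p" "p \<le> 1" and dl: "0 < \<delta>" "\<delta> < 1" and r: "r \<le> 100"
  shows "\<delta> powr (- (real s * (\<delta> * (real n * p)))) * (1 - p + \<delta> * p) ^ (s * (n - r))
           \<le> (exp 100 * exp (- (markov_rate \<delta> * (real n * p)))) ^ s"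
proof -
  have "(1 - \<delta>) * p \<le> 1" using p dl by (simp add: mult_le_one)
  hence "0 \<le> 1 - p + \<delta> * p" by (simp add: algebra_simps)
  have "\<delta> powr (- (real s * (\<delta> * (real n * p)))) * (1 - p + \<delta> * p) ^ (s * (n - r))
          = (\<delta> powr (- (\<delta> * (real n * p))) * (1 - p + \<delta> * p) ^ (n - r)) ^ s"
    using dl by (simp add: powr_def exp_of_nat_mult[symmetric] power_mult_distrib
                           power_mult[symmetric] mult.commute)
  also have "\<dots> \<le> (exp 100 * exp (- (markov_rate \<delta> * (real n * p)))) ^ s"
    using degree_tail_le[OF p dl r] \<open>0 \<le> 1 - p + \<delta> * p\<close> by (intro power_mono) auto
  finally show ?thesis .
qed

lemma degree_witness_term_le:
  assumes p: "0 \<le> p" "p \<le> 1" and dl: "0 < \<delta>" "\<delta> < 1" and d1: "1 \<le> real n * p"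
    and j: "j \<le> 1" and s: "s \<le> 3" and r: "1 \<le> r" "r \<le> 100"
  shows "real (card (witnesses n r (r - j) s)) *
           (\<delta> powr (- (real s * (\<delta> * (real n * p)))) * p ^ (r - j) * (1 - p + \<delta> * p) ^ (s * (n - r)))
         \<le> witness_bound * real n ^ j * (real n * p) ^ 100 *
             (exp 100 * exp (- (markov_rate \<delta> * (real n * p)))) ^ s"
proof -
  let ?d = "real n * p" and ?b = "exp 100 * exp (- (markov_rate \<delta> * (real n * p)))"
  let ?tail = "\<delta> powr (- (real s * (\<delta> * ?d))) * (1 - p + \<delta> * p) ^ (s * (n - r))"
  have "real n ^ r * p ^ (r - j) = real n ^ j * ?d ^ (r - j)"
    using r j by (simp add: power_mult_distrib power_add[symmetric])
  also have "\<dots> \<le> real n ^ j * ?d ^ 100"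
    using d1 r by (intro mult_left_mono power_increasing) auto
  finally have np: "real n ^ r * p ^ (r - j) \<le> real n ^ j * ?d ^ 100" .
  have "(1 - \<delta>) * p \<le> 1" using p dl by (simp add: mult_le_one)
  hence "0 \<le> ?tail" by (intro mult_nonneg_nonneg zero_le_power) (auto simp: algebra_simps)
  have "real (card (witnesses n r (r - j) s)) *
          (\<delta> powr (- (real s * (\<delta> * ?d))) * p ^ (r - j) * (1 - p + \<delta> * p) ^ (s * (n - r)))
        = real (card (witnesses n r (r - j) s)) * p ^ (r - j) * ?tail"
    by (simp only: mult_ac)
  also have "\<dots> \<le> (real n ^ r * witness_bound) * p ^ (r - j) * ?b ^ s"
    using card_witnesses_le_witness_bound[of r "r - j" s n] degree_tail_power_le[OF p dl r(2)]
      r s p \<open>0 \<le> ?tail\<close> witness_bound_pos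
    by (intro mult_mono mult_right_mono) auto
  also have "\<dots> \<le> witness_bound * real n ^ j * ?d ^ 100 * ?b ^ s"
    using np witness_bound_pos by (simp add: mult.assoc mult.left_commute[of witness_bound]
        mult_left_mono mult_right_mono)
  finally show ?thesis .
qed

lemma degree_witness_sum_le:
  assumes p: "0 \<le> p" "p \<le> 1" and dl: "0 < \<delta>" "\<delta> < 1" and d1: "1 \<le> real n * p"
    and j: "j \<le> 1" and s: "s \<le> 3"
  shows "(\<Sum>r\<in>{1..100}. real (card (witnesses n r (r - j) s)) *
            (\<delta> powr (- (real s * (\<delta> * (real n * p)))) * p ^ (r - j) * (1 - p + \<delta> * p) ^ (s * (n - r))))
         \<le> 100 * (witness_bound * real n ^ j * (real n * p) ^ 100 *
                  (exp 100 * exp (- (markov_rate \<delta> * (real n * p)))) ^ s)"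
  using sum_bounded_above[of "{1..100::nat}", OF degree_witness_term_le[OF p dl d1 j s]] by simp

lemma component_term_le:
  assumes p: "0 \<le> p" "p \<le> 1" and k: "3 \<le> k"
  shows "real (card (witnesses n k (k - 1) 0)) * (p ^ (k - 1) * (1 - p) ^ (k * (n - k)))
           \<le> real k * exp (2 * real k) * real n * (real n * p) ^ (k - 1) * exp (- (p * real (k * (n - k))))"
proof -
  have "(1 - p) ^ (k * (n - k)) \<le> exp (- p) ^ (k * (n - k))"
    using exp_ge_add_one_self[of "- p"] p by (intro power_mono) auto
  hence decay: "(1 - p) ^ (k * (n - k)) \<le> exp (- (p * real (k * (n - k))))"
    by (simp add: exp_of_nat_mult[symmetric] mult.commute)
  have "real n ^ k = real n * real n ^ (k - 1)" using k by (cases k) auto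
  hence np: "real n ^ k * p ^ (k - 1) = real n * (real n * p) ^ (k - 1)"
    by (simp add: power_mult_distrib)
  have "real (card (witnesses n k (k - 1) 0)) * (p ^ (k - 1) * (1 - p) ^ (k * (n - k)))
      \<le> (real k * exp (2 * real k) * real n ^ k) * (p ^ (k - 1) * exp (- (p * real (k * (n - k)))))"
    using k p by (intro mult_mono card_component_witnesses mult_left_mono decay) auto
  also have "\<dots> = real k * exp (2 * real k) * (real n ^ k * p ^ (k - 1)) * exp (- (p * real (k * (n - k))))"
    by (simp add: algebra_simps)
  finally show ?thesis unfolding np by (simp add: algebra_simps)
qed

lemma small_component_term_le:
  assumes p: "0 \<le> p" "p \<le> 1" and k: "3 \<le> k" "k \<le> 100" "2 * k \<le> n"
  shows "real (card (witnesses n k (k - 1) 0)) * (p ^ (k - 1) * (1 - p) ^ (k * (n - k)))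
           \<le> 100 * exp 10200 * real n * (real n * p) ^ 2 * exp (- (3 * (real n * p)))"
proof -
  let ?d = "real n * p"
  have d0: "0 \<le> ?d" using p by simp
  have ex: "- (p * real (k * (n - k))) \<le> 10000 - real k * ?d"
  proof -
    have "p * (real k * real k) \<le> 1 * (100 * 100)" using k p by (intro mult_mono) auto
    thus ?thesis using k by (simp add: of_nat_diff algebra_simps)
  qed
  have "?d ^ (k - 1) * exp (- (real k * ?d)) = ?d ^ 2 * exp (- (3 * ?d)) * (?d * exp (- ?d)) ^ (k - 3)"
  proof -
    have e: "k - 1 = 2 + (k - 3)" using k by simp
    have "?d ^ (k - 1) = ?d ^ 2 * ?d ^ (k - 3)" unfolding e by (rule power_add)
    moreover have "exp (- (real k * ?d)) = exp (- (3 * ?d)) * exp (- ?d) ^ (k - 3)"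
      using k by (simp add: exp_add[symmetric] exp_of_nat_mult[symmetric] of_nat_diff algebra_simps)
    ultimately show ?thesis by (simp add: power_mult_distrib algebra_simps)
  qed
  also have "\<dots> \<le> ?d ^ 2 * exp (- (3 * ?d)) * 1"
  proof -
    have "?d \<le> exp ?d" using exp_ge_add_one_self[of ?d] by linarith
    hence "?d * exp (- ?d) \<le> exp ?d * exp (- ?d)" by (intro mult_right_mono) auto
    hence "?d * exp (- ?d) \<le> 1" by (simp add: exp_minus)
    thus ?thesis using d0 by (intro mult_left_mono power_le_one) auto
  qed
  finally have pk: "?d ^ (k - 1) * exp (- (real k * ?d)) \<le> ?d ^ 2 * exp (- (3 * ?d))" by simp
  have "real (card (witnesses n k (k - 1) 0)) * (p ^ (k - 1) * (1 - p) ^ (k * (n - k)))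
          \<le> real k * exp (2 * real k) * real n * ?d ^ (k - 1) * exp (- (p * real (k * (n - k))))"
    by (rule component_term_le[OF p k(1)])
  also have "\<dots> \<le> 100 * exp 200 * real n * ?d ^ (k - 1) * exp (10000 - real k * ?d)"
    using k d0 ex by (intro mult_mono) auto
  also have "\<dots> = 100 * exp 200 * exp 10000 * real n * (?d ^ (k - 1) * exp (- (real k * ?d)))"
    by (simp add: exp_diff exp_minus field_simps)
  also have "\<dots> \<le> 100 * exp 200 * exp 10000 * real n * (?d ^ 2 * exp (- (3 * ?d)))"
    by (rule mult_left_mono[OF pk]) simp
  finally show ?thesis by (simp add: exp_add[symmetric] algebra_simps)
qed

lemma large_component_term_le:
  assumes p: "0 \<le> p" "p \<le> 1" and k: "100 < k" "2 * k \<le> n" and d1: "1 \<le> real n * p"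
    and ratio: "exp 2 * (real n * p) * exp (- (real n * p / 2)) \<le> real n powr (- 1 / 24)"
  shows "real (card (witnesses n k (k - 1) 0)) * (p ^ (k - 1) * (1 - p) ^ (k * (n - k)))
           \<le> real n ^ 2 * real n powr (- 101 / 24)"
proof -
  let ?d = "real n * p"
  let ?r = "exp 2 * ?d * exp (- (?d / 2))"
  have n1: "1 \<le> real n" using d1 p mult_left_le[of p "real n"] by linarith
  have r0: "0 \<le> ?r" using d1 by simp
  have "real n powr (- 1 / 24) \<le> real n powr 0" using n1 by (intro powr_mono) auto
  hence "?r \<le> 1" using ratio n1 by simp
  have ex: "- (p * real (k * (n - k))) \<le> - (real k * (?d / 2))"
  proof -
    have "real n / 2 \<le> real (n - k)" using k by (simp add: of_nat_diff)
    hence "p * real k * (real n / 2) \<le> p * real k * real (n - k)" using p by (intro mult_left_mono) auto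
    moreover have "real (k * (n - k)) = real k * real (n - k)" by (rule of_nat_mult)
    ultimately show ?thesis by (simp only:) (simp add: algebra_simps)
  qed
  have "real (card (witnesses n k (k - 1) 0)) * (p ^ (k - 1) * (1 - p) ^ (k * (n - k)))
          \<le> real k * exp (2 * real k) * real n * ?d ^ (k - 1) * exp (- (p * real (k * (n - k))))"
    using k by (intro component_term_le[OF p]) auto
  also have "\<dots> \<le> real n * exp (2 * real k) * real n * ?d ^ k * exp (- (real k * (?d / 2)))"
    using k d1 ex by (intro mult_mono power_increasing) auto
  also have "\<dots> = real n ^ 2 * ?r ^ k"
    by (simp add: power_mult_distrib exp_of_nat_mult[symmetric] exp_add[symmetric]
                  power2_eq_square algebra_simps)
  also have "\<dots> \<le> real n ^ 2 * ?r ^ 101"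
    using k r0 \<open>?r \<le> 1\<close> by (intro mult_left_mono power_decreasing) auto
  also have "\<dots> \<le> real n ^ 2 * (real n powr (- 1 / 24)) ^ 101"
    using r0 ratio by (intro mult_left_mono power_mono) auto
  also have "(real n powr (- 1 / 24)) ^ 101 = real n powr (- 101 / 24)"
    using n1 by (simp add: powr_realpow[symmetric] powr_powr)
  finally show ?thesis .
qed

lemma component_witness_sum_le:
  assumes p: "0 \<le> p" "p \<le> 1" and d1: "1 \<le> real n * p"
    and ratio: "exp 2 * (real n * p) * exp (- (real n * p / 2)) \<le> real n powr (- 1 / 24)"
  shows "(\<Sum>k\<in>{3..n div 2}. real (card (witnesses n k (k - 1) 0)) * (p ^ (k - 1) * (1 - p) ^ (k * (n - k))))
           \<le> 101 * (100 * exp 10200 * real n * (real n * p) ^ 2 * exp (- (3 * (real n * p))))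
             + real (n + 1) * (real n ^ 2 * real n powr (- 101 / 24))"
proof -
  let ?f = "\<lambda>k. real (card (witnesses n k (k - 1) 0)) * (p ^ (k - 1) * (1 - p) ^ (k * (n - k)))"
  let ?A = "100 * exp 10200 * real n * (real n * p) ^ 2 * exp (- (3 * (real n * p)))"
  let ?B = "real n ^ 2 * real n powr (- 101 / 24)"
  have "(\<Sum>k\<in>{3..n div 2}. ?f k) \<le> (\<Sum>k\<in>{3..n div 2}. if k \<le> 100 then ?A else ?B)"
    using small_component_term_le[OF p] large_component_term_le[OF p _ _ d1 ratio]
    by (intro sum_mono) auto
  also have "\<dots> = (\<Sum>k\<in>{3..n div 2} \<inter> {k. k \<le> 100}. ?A) + (\<Sum>k\<in>{3..n div 2} \<inter> - {k. k \<le> 100}. ?B)"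
    by (rule sum.If_cases) simp
  also have "\<dots> \<le> 101 * ?A + real (n + 1) * ?B"
  proof (intro add_mono)
    have "card ({3..n div 2} \<inter> {k. k \<le> 100}) \<le> card {..100::nat}" by (intro card_mono) auto
    hence "real (card ({3..n div 2} \<inter> {k. k \<le> 100})) * ?A \<le> 101 * ?A"
      using d1 by (intro mult_right_mono) auto
    thus "(\<Sum>k\<in>{3..n div 2} \<inter> {k. k \<le> 100}. ?A) \<le> 101 * ?A" by (simp only: sum_constant)
    have "card ({3..n div 2} \<inter> - {k. k \<le> 100}) \<le> card {..n}" by (intro card_mono) auto
    hence "real (card ({3..n div 2} \<inter> - {k. k \<le> 100})) * ?B \<le> real (n + 1) * ?B"
      by (intro mult_right_mono) auto
    thus "(\<Sum>k\<in>{3..n div 2} \<inter> - {k. k \<le> 100}. ?B) \<le> real (n + 1) * ?B"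
      by (simp only: sum_constant)
  qed
  finally show ?thesis .
qed

lemma one_minus_gnp_prob_le:
  assumes p: "0 \<le> p" "p \<le> 1" and dl: "0 < \<delta>" "\<delta> < 1" and d1: "1 \<le> real n * p"
    and ratio: "exp 2 * (real n * p) * exp (- (real n * p / 2)) \<le> real n powr (- 1 / 24)"
  defines "b \<equiv> exp 100 * exp (- (markov_rate \<delta> * (real n * p)))"
  shows "1 - gnp_prob n p (\<lambda>E. prop_C1 n E (\<delta> * real n * p) \<and> prop_C2 n E (\<delta> * real n * p) \<and> prop_C3 n E)
    \<le> 100 * (witness_bound * real n * (real n * p) ^ 100 * b ^ 3)
     + 100 * (witness_bound * (real n * p) ^ 100 * b)
     + (101 * (100 * exp 10200 * real n * (real n * p) ^ 2 * exp (- (3 * (real n * p))))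
        + real (n + 1) * (real n ^ 2 * real n powr (- 101 / 24)))"
proof -
  let ?D = "\<delta> * real n * p"
  have "1 - gnp_expect n p (bad_weight n \<delta> ?D)
          \<le> gnp_prob n p (\<lambda>E. prop_C1 n E ?D \<and> prop_C2 n E ?D \<and> prop_C3 n E)"
    using dl by (intro gnp_prob_ge_one_minus_expect[OF p] bad_weight_nonneg one_le_bad_weight) auto
  moreover have "gnp_expect n p (bad_weight n \<delta> ?D)
      \<le> 100 * (witness_bound * real n * (real n * p) ^ 100 * b ^ 3)
       + 100 * (witness_bound * (real n * p) ^ 100 * b)
       + (101 * (100 * exp 10200 * real n * (real n * p) ^ 2 * exp (- (3 * (real n * p))))
          + real (n + 1) * (real n ^ 2 * real n powr (- 101 / 24)))"
    unfolding gnp_expect_bad_weight b_def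
    using degree_witness_sum_le[OF p dl d1, of 1 3] degree_witness_sum_le[OF p dl d1, of 0 1]
      component_witness_sum_le[OF p d1 ratio]
    by (intro add_mono) (simp_all add: mult.assoc)
  ultimately show ?thesis by linarith
qed

lemma eventually_le_powr:
  assumes c: "0 < c"
  shows "\<forall>\<^sub>F n in sequentially. M \<le> real n powr c"
proof -
  define B where "B = max M 1"
  have "\<forall>\<^sub>F n in sequentially. nat \<lceil>B powr (1 / c)\<rceil> \<le> n" by (rule eventually_ge_at_top)
  thus ?thesis
  proof eventually_elim
    case (elim n)
    hence "B powr (1 / c) \<le> real n" by linarith
    hence "(B powr (1 / c)) powr c \<le> real n powr c" using c by (intro powr_mono2) auto
    thus "M \<le> real n powr c" unfolding B_def using c by (simp add: powr_powr)
  qed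
qed

section \<open>The regime np \<ge> (1/3 + \<epsilon>) log n\<close>

definition first_moment_const :: "real \<Rightarrow> real" where
  "first_moment_const \<epsilon> =
     100 * witness_bound * (exp 300 + exp 100) * (500 / \<epsilon>) ^ 100 + 10100 * exp 10200 * (10 / \<epsilon>) ^ 2 + 2"

locale dense_gnp_regime =
  fixes \<epsilon> p :: real and n :: nat
  assumes eps: "0 < \<epsilon>" "\<epsilon> < 1/100" and p: "0 \<le> p" "p \<le> 1"
    and n_ge: "exp 3 \<le> real n" and n_root: "4 * exp 2 \<le> real n powr (1/24)"
    and dense: "(1/3 + \<epsilon>) * ln (real n) \<le> real n * p"
begin

lemma n_ge_1: "1 \<le> real n"
proof -
  have "1 \<le> exp (3::real)" by simp
  thus ?thesis using n_ge by linarith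
qed

lemma ln_n_ge_3: "3 \<le> ln (real n)"
  using n_ge n_ge_1 ln_le_cancel_iff[of "exp 3" "real n"] by simp

lemma np_ge_ln: "ln (real n) / 3 \<le> real n * p"
proof -
  have "0 \<le> \<epsilon> * ln (real n)" using eps ln_n_ge_3 by simp
  moreover have "(1/3 + \<epsilon>) * ln (real n) = ln (real n) / 3 + \<epsilon> * ln (real n)"
    by (simp add: algebra_simps)
  ultimately show ?thesis using dense by linarith
qed

lemma np_ge_1: "1 \<le> real n * p"
  using np_ge_ln ln_n_ge_3 by linarith

lemma component_ratio_le: "exp 2 * (real n * p) * exp (- (real n * p / 2)) \<le> real n powr (- 1 / 24)"
proof -
  let ?d = "real n * p"
  have "?d \<le> 4 * exp (?d / 4)" using exp_ge_add_one_self[of "?d / 4"] by linarith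
  hence "exp 2 * ?d * exp (- (?d / 2)) \<le> exp 2 * (4 * exp (?d / 4)) * exp (- (?d / 2))"
    by (intro mult_right_mono mult_left_mono) auto
  also have "\<dots> = 4 * exp 2 * exp (- ((1/4) * ?d))" by (simp add: exp_add[symmetric] algebra_simps)
  also have "\<dots> \<le> 4 * exp 2 * real n powr (- ((1/4) * (1/3)))"
    using n_ge_1 np_ge_ln by (intro mult_left_mono exp_bound_from_ln) auto
  also have "\<dots> \<le> real n powr (1 / 24) * real n powr (- ((1/4) * (1/3)))"
    by (rule mult_right_mono[OF n_root]) simp
  also have "\<dots> = real n powr (- 1 / 24)" using n_ge_1 by (simp add: powr_add[symmetric])
  finally show ?thesis .
qed

lemma powr_le_powr_neg_two_eps:
  assumes "u \<le> - (2 * \<epsilon>)"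
  shows "real n powr u \<le> real n powr (- (2 * \<epsilon>))"
  by (rule powr_mono[OF assms n_ge_1])

lemma n_mult_powr: "real n * real n powr (- u) = real n powr (1 - u)"
  using n_ge_1 by (simp add: powr_diff powr_minus divide_inverse)

text \<open>The polynomial factor in np is absorbed by the exponential decay at the cost of
  \<epsilon>/5 in its rate.\<close>
lemma np_power_decay_le:
  assumes "\<epsilon> / 5 \<le> \<gamma>"
  shows "(real n * p) ^ m * exp (- (\<gamma> * (real n * p)))
           \<le> (real m / (\<epsilon> / 5)) ^ m * real n powr (- ((\<gamma> - \<epsilon> / 5) * (1/3 + \<epsilon>)))"
  using power_exp_decay_le_powr[OF n_ge_1 _ dense _ assms] np_ge_1 eps by simp

lemma eps_square_le: "\<epsilon> * \<epsilon> \<le> \<epsilon> / 100"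
  using eps by (simp add: mult_left_le)

lemma three_small_degrees_bound:
  defines "b \<equiv> exp 100 * exp (- (markov_rate (\<epsilon>^2/400) * (real n * p)))"
  shows "100 * (witness_bound * real n * (real n * p) ^ 100 * b ^ 3)
           \<le> 100 * witness_bound * exp 300 * (500 / \<epsilon>) ^ 100 * real n powr (- (2 * \<epsilon>))"
proof -
  let ?d = "real n * p" and ?c = "markov_rate (\<epsilon>^2/400)" and ?a = "\<epsilon> / 5" and ?K = "1/3 + \<epsilon>"
  have c: "1 - \<epsilon> / 5 \<le> ?c" by (rule markov_rate_ge[OF eps])
  have "b ^ 3 = exp 300 * exp (- ((3 * ?c) * ?d))"
    unfolding b_def by (simp add: power_mult_distrib exp_of_nat_mult[symmetric] algebra_simps)
  hence "100 * (witness_bound * real n * ?d ^ 100 * b ^ 3)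
           = 100 * witness_bound * exp 300 * (real n * (?d ^ 100 * exp (- ((3 * ?c) * ?d))))"
    by (simp add: algebra_simps)
  also have "\<dots> \<le> 100 * witness_bound * exp 300 *
                   (real n * ((500 / \<epsilon>) ^ 100 * real n powr (- ((3 * ?c - ?a) * ?K))))"
    using np_power_decay_le[of "3 * ?c" 100] c eps witness_bound_pos n_ge_1
    by (intro mult_left_mono) auto
  also have "\<dots> = 100 * witness_bound * exp 300 * ((500 / \<epsilon>) ^ 100 * real n powr (1 - (3 * ?c - ?a) * ?K))"
    by (simp only: mult.left_commute[of "real n"] n_mult_powr)
  also have "\<dots> \<le> 100 * witness_bound * exp 300 * ((500 / \<epsilon>) ^ 100 * real n powr (- (2 * \<epsilon>)))"
  proof -
    have "(3 - 4 * \<epsilon> / 5) * ?K \<le> (3 * ?c - ?a) * ?K" using c eps by (intro mult_right_mono) auto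
    moreover have "(3 - 4 * \<epsilon> / 5) * ?K = 1 + 3 * \<epsilon> - 4 * \<epsilon> / 15 - 4 / 5 * (\<epsilon> * \<epsilon>)"
      by (simp add: field_simps)
    ultimately have "1 - (3 * ?c - ?a) * ?K \<le> - (2 * \<epsilon>)" using eps eps_square_le by linarith
    thus ?thesis using eps witness_bound_pos by (intro mult_left_mono powr_le_powr_neg_two_eps) auto
  qed
  finally show ?thesis by (simp add: mult.assoc)
qed

lemma one_small_degree_bound:
  defines "b \<equiv> exp 100 * exp (- (markov_rate (\<epsilon>^2/400) * (real n * p)))"
  shows "100 * (witness_bound * (real n * p) ^ 100 * b)
           \<le> 100 * witness_bound * exp 100 * (500 / \<epsilon>) ^ 100 * real n powr (- (2 * \<epsilon>))"
proof -
  let ?d = "real n * p" and ?c = "markov_rate (\<epsilon>^2/400)" and ?a = "\<epsilon> / 5" and ?K = "1/3 + \<epsilon>"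
  have c: "1 - \<epsilon> / 5 \<le> ?c" by (rule markov_rate_ge[OF eps])
  have "100 * (witness_bound * ?d ^ 100 * b)
          = 100 * witness_bound * exp 100 * (?d ^ 100 * exp (- (?c * ?d)))"
    unfolding b_def by (simp add: algebra_simps)
  also have "\<dots> \<le> 100 * witness_bound * exp 100 * ((500 / \<epsilon>) ^ 100 * real n powr (- ((?c - ?a) * ?K)))"
    using np_power_decay_le[of ?c 100] c eps witness_bound_pos by (intro mult_left_mono) auto
  also have "\<dots> \<le> 100 * witness_bound * exp 100 * ((500 / \<epsilon>) ^ 100 * real n powr (- (2 * \<epsilon>)))"
  proof -
    have "(1/2) * (1/3) \<le> (?c - ?a) * ?K" using c eps by (intro mult_mono) auto
    hence "- ((?c - ?a) * ?K) \<le> - (2 * \<epsilon>)" using eps by linarith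
    thus ?thesis using eps witness_bound_pos by (intro mult_left_mono powr_le_powr_neg_two_eps) auto
  qed
  finally show ?thesis by (simp add: mult.assoc)
qed

lemma small_components_bound:
  "101 * (100 * exp 10200 * real n * (real n * p) ^ 2 * exp (- (3 * (real n * p))))
     \<le> 10100 * exp 10200 * (10 / \<epsilon>) ^ 2 * real n powr (- (2 * \<epsilon>))"
proof -
  let ?d = "real n * p" and ?a = "\<epsilon> / 5" and ?K = "1/3 + \<epsilon>"
  have "101 * (100 * exp 10200 * real n * ?d ^ 2 * exp (- (3 * ?d)))
          = 10100 * exp 10200 * (real n * (?d ^ 2 * exp (- (3 * ?d))))" by (simp add: algebra_simps)
  also have "\<dots> \<le> 10100 * exp 10200 * (real n * ((10 / \<epsilon>) ^ 2 * real n powr (- ((3 - ?a) * ?K))))"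
    using np_power_decay_le[of 3 2] eps n_ge_1 by (intro mult_left_mono) (auto simp: numeral_eq_Suc)
  also have "\<dots> = 10100 * exp 10200 * ((10 / \<epsilon>) ^ 2 * real n powr (1 - (3 - ?a) * ?K))"
    by (simp only: mult.left_commute[of "real n"] n_mult_powr)
  also have "\<dots> \<le> 10100 * exp 10200 * ((10 / \<epsilon>) ^ 2 * real n powr (- (2 * \<epsilon>)))"
  proof -
    have "(3 - ?a) * ?K = 1 + 3 * \<epsilon> - \<epsilon> / 15 - 1 / 5 * (\<epsilon> * \<epsilon>)"
      by (simp add: field_simps)
    hence "1 - (3 - ?a) * ?K \<le> - (2 * \<epsilon>)" using eps eps_square_le by linarith
    thus ?thesis by (intro mult_left_mono powr_le_powr_neg_two_eps) auto
  qed
  finally show ?thesis by (simp add: mult.assoc)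
qed

lemma large_components_bound:
  "real (n + 1) * (real n ^ 2 * real n powr (- 101 / 24)) \<le> 2 * real n powr (- (2 * \<epsilon>))"
proof -
  have "real (n + 1) * (real n ^ 2 * real n powr (- 101 / 24))
          \<le> 2 * real n * (real n ^ 2 * real n powr (- 101 / 24))"
    using n_ge_1 by (intro mult_right_mono) auto
  also have "\<dots> = 2 * (real n powr 3 * real n powr (- 101 / 24))"
    using n_ge_1 by (simp add: powr_realpow power3_eq_cube power2_eq_square algebra_simps)
  also have "\<dots> = 2 * real n powr (3 + (- 101 / 24))" by (simp only: powr_add)
  also have "\<dots> = 2 * real n powr (3 - 101 / 24)" by simp
  also have "\<dots> \<le> 2 * real n powr (- (2 * \<epsilon>))"
    using eps by (intro mult_left_mono powr_le_powr_neg_two_eps) auto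
  finally show ?thesis .
qed

lemma gnp_prob_ge_first_moment:
  "1 - first_moment_const \<epsilon> * real n powr (- (2 * \<epsilon>))
     \<le> gnp_prob n p (\<lambda>E. prop_C1 n E (\<epsilon>^2/400 * real n * p) \<and> prop_C2 n E (\<epsilon>^2/400 * real n * p)
                          \<and> prop_C3 n E)"
proof -
  have "\<epsilon>^2 \<le> 1" using eps by (simp add: power_le_one)
  hence "0 < \<epsilon>^2/400" "\<epsilon>^2/400 < 1" using eps by auto
  moreover have "first_moment_const \<epsilon> * real n powr (- (2 * \<epsilon>)) =
      100 * witness_bound * exp 300 * (500 / \<epsilon>) ^ 100 * real n powr (- (2 * \<epsilon>))
      + 100 * witness_bound * exp 100 * (500 / \<epsilon>) ^ 100 * real n powr (- (2 * \<epsilon>))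
      + (10100 * exp 10200 * (10 / \<epsilon>) ^ 2 * real n powr (- (2 * \<epsilon>))
         + 2 * real n powr (- (2 * \<epsilon>)))"
    unfolding first_moment_const_def by (simp add: algebra_simps)
  ultimately show ?thesis
    using one_minus_gnp_prob_le[OF p _ _ np_ge_1 component_ratio_le, of "\<epsilon>^2/400"]
      three_small_degrees_bound one_small_degree_bound small_components_bound large_components_bound
    by linarith
qed

end

lemma eventually_gnp_prob_good:
  assumes eps: "0 < \<epsilon>" "\<epsilon> < 1/100" and p: "\<And>n. 0 \<le> p n" "\<And>n. p n \<le> 1"
    and dense: "\<forall>\<^sub>F n in sequentially. (1/3 + \<epsilon>) * ln (real n) \<le> real n * p n"
  shows "\<forall>\<^sub>F n in sequentially. 1 - real n powr (- \<epsilon>) \<le>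
           gnp_prob n (p n) (\<lambda>E. prop_C1 n E (\<epsilon>^2 / 400 * real n * p n) \<and>
                                 prop_C2 n E (\<epsilon>^2 / 400 * real n * p n) \<and> prop_C3 n E)"
proof -
  have "\<forall>\<^sub>F n in sequentially. exp 3 \<le> real n powr 1" by (rule eventually_le_powr) simp
  moreover have "\<forall>\<^sub>F n in sequentially. 4 * exp 2 \<le> real n powr (1/24)"
    by (rule eventually_le_powr) simp
  moreover have "\<forall>\<^sub>F n in sequentially. first_moment_const \<epsilon> \<le> real n powr \<epsilon>"
    using eps by (intro eventually_le_powr)
  ultimately show ?thesis using dense
  proof eventually_elim
    case (elim n)
    have "exp 3 \<le> real n" using elim(1) by (cases "n = 0") auto
    hence "dense_gnp_regime \<epsilon> (p n) n"
      unfolding dense_gnp_regime_def using eps p elim(2,4) by auto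
    hence "1 - first_moment_const \<epsilon> * real n powr (- (2 * \<epsilon>))
             \<le> gnp_prob n (p n) (\<lambda>E. prop_C1 n E (\<epsilon>^2 / 400 * real n * p n) \<and>
                                     prop_C2 n E (\<epsilon>^2 / 400 * real n * p n) \<and> prop_C3 n E)"
      by (rule dense_gnp_regime.gnp_prob_ge_first_moment)
    moreover have "first_moment_const \<epsilon> * real n powr (- (2 * \<epsilon>))
                     \<le> real n powr \<epsilon> * real n powr (- (2 * \<epsilon>))"
      using elim(3) by (rule mult_right_mono) simp
    ultimately show ?case by (simp add: powr_add[symmetric])
  qed
qed

theorem lemma5p10:
  shows "\<exists>\<epsilon>0>0. \<forall>\<epsilon>::real. 0 < \<epsilon> \<and> \<epsilon> < \<epsilon>0 \<longrightarrow>
     (\<exists>\<delta>>0. \<forall>p :: nat \<Rightarrow> real.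
        (\<forall>n. 0 \<le> p n \<and> p n \<le> 1) \<and>
        (\<forall>\<^sub>F n in sequentially. real n * p n \<ge> (1/3 + \<epsilon>) * ln (real n))
        \<longrightarrow> (\<forall>\<^sub>F n in sequentially.
               gnp_prob n (p n) (\<lambda>E. prop_C1 n E (\<delta> * real n * p n) \<and>
                                     prop_C2 n E (\<delta> * real n * p n) \<and>
                                     prop_C3 n E)
               \<ge> 1 - real n powr (-\<epsilon>)))"
  apply (rule exI[of _ "1/100"], intro conjI allI impI)
   apply simp
  subgoal for \<epsilon>
    by (intro exI[of _ "\<epsilon>^2 / 400"] conjI allI impI eventually_gnp_prob_good) auto
  done

end
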